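(* Let $\mathcal{R}$ be the hyperfinite $II_1$ factor with normalized trace $\tau$, realized as the weak closure of the increasing union $\bigcup_{j\ge0} M_{2^j}(\mathbb{C})$; let $P_n$ be the orthogonal projection of $L^2(\mathcal{R},\tau)$ onto $M_{2^n}(\mathbb{C})$ and $Q_n=I-P_n$. Let $(\mathcal{E},D(\mathcal{E}))$ be a Dirichlet form on $L^2(\mathcal{R},\tau)$ with $D(\mathcal{E})\supseteq \bigcup_{j\ge0}M_{2^j}(\mathbb{C})$, and set $\mathcal{E}_n(a)=\mathcal{E}(P_na)$. Then the following are equivalent: (1) $\lim_{n\to\infty}\mathcal{E}_n(a)=\mathcal{E}(a)$ for all $a\in D(\mathcal{E})$; (2) $\lim_{n\to\infty}\mathcal{E}(Q_na)=0$ for all $a\in D(\mathcal{E})$.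
   Context: $M_{2^n}(\mathbb{C})$ is embedded in $M_{2^{n+1}}(\mathbb{C})$ via $a\mapsto \mathrm{diag}(a,a)$. $L^2(\mathcal{R},\tau)$ is the completion of $\mathcal{R}$ in $\|a\|_2=\tau(a^*a)^{1/2}$; $J$ is the antilinear isometry extending $a\mapsto a^*$; $L^2_+$ is the closure of the positive elements of $\mathcal{R}$; for real ($J$-invariant) $a$, $a\wedge1$ is the Hilbert projection of $a$ onto the $L^2$-closure of $\{b\in L^2_+: b\le 1\}$. A Dirichlet form is a closed, densely defined, nonnegative quadratic form on $L^2(\mathcal{R},\tau)$ that is real ($D(\mathcal{E})$ is $J$-invariant and $\mathcal{E}(Ja)=\mathcal{E}(a)$) and satisfies $\mathcal{E}(a\wedge1)\le\mathcal{E}(a)$ for real $a\in D(\mathcal{E})$. *)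

theory Defs
  imports Complex_Main
begin

text \<open>A matrix of level k is a function nat => nat => complex vanishing outside [0,2^k)^2.
  An element of L^2(R,tau) is represented by the compatible family x = (x k)_k of its
  conditional expectations onto M_{2^k}(C) (an L^2-bounded martingale); this family
  determines the element, and every such bounded compatible family arises.\<close>

type_synonym cmat = "nat \<Rightarrow> nat \<Rightarrow> complex"
type_synonym l2 = "nat \<Rightarrow> cmat"

definition is_mat :: "nat \<Rightarrow> cmat \<Rightarrow> bool" where
  "is_mat k A \<longleftrightarrow> (\<forall>i j. (2^k \<le> i \<or> 2^k \<le> j) \<longrightarrow> A i j = 0)"

definition diag2 :: "nat \<Rightarrow> cmat \<Rightarrow> cmat" where
  "diag2 k A = (\<lambda>i j.
     if i < 2^k \<and> j < 2^k then A i j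
     else if 2^k \<le> i \<and> i < 2^(Suc k) \<and> 2^k \<le> j \<and> j < 2^(Suc k)
       then A (i - 2^k) (j - 2^k) else 0)"

primrec embed_up :: "nat \<Rightarrow> nat \<Rightarrow> cmat \<Rightarrow> cmat" where
  "embed_up n 0 A = A"
| "embed_up n (Suc m) A = diag2 (n + m) (embed_up n m A)"

text \<open>The trace-preserving conditional expectation M_{2^(k+1)} -> M_{2^k}
  (the inverse image of the tau-orthogonal projection onto diag(M_{2^k}, M_{2^k})).\<close>
definition cexp :: "nat \<Rightarrow> cmat \<Rightarrow> cmat" where
  "cexp k B = (\<lambda>i j. if i < 2^k \<and> j < 2^k then (B i j + B (i + 2^k) (j + 2^k)) / 2 else 0)"

definition hs_sq :: "nat \<Rightarrow> cmat \<Rightarrow> real" where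
  "hs_sq k A = (\<Sum>i<2^k. \<Sum>j<2^k. (cmod (A i j))\<^sup>2) / 2^k"

definition L2 :: "l2 set" where
  "L2 = {x. (\<forall>k. is_mat k (x k)) \<and> (\<forall>k. cexp k (x (Suc k)) = x k)
            \<and> bdd_above (range (\<lambda>k. hs_sq k (x k)))}"

definition l2add :: "l2 \<Rightarrow> l2 \<Rightarrow> l2" where
  "l2add x y = (\<lambda>k i j. x k i j + y k i j)"

definition l2minus :: "l2 \<Rightarrow> l2 \<Rightarrow> l2" where
  "l2minus x y = (\<lambda>k i j. x k i j - y k i j)"

definition l2scale :: "complex \<Rightarrow> l2 \<Rightarrow> l2" where
  "l2scale c x = (\<lambda>k i j. c * x k i j)"

definition l2J :: "l2 \<Rightarrow> l2" where
  "l2J x = (\<lambda>k i j. cnj (x k j i))"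

definition l2nsq :: "l2 \<Rightarrow> real" where
  "l2nsq x = (SUP k. hs_sq k (x k))"

definition l2dist :: "l2 \<Rightarrow> l2 \<Rightarrow> real" where
  "l2dist x y = sqrt (l2nsq (l2minus x y))"

definition l2closure :: "l2 set \<Rightarrow> l2 set" where
  "l2closure S = {x \<in> L2. \<forall>e>0. \<exists>s\<in>S. l2dist x s < e}"

definition hproj :: "l2 set \<Rightarrow> l2 \<Rightarrow> l2" where
  "hproj S x = (THE y. y \<in> S \<and> (\<forall>z\<in>S. l2dist x y \<le> l2dist x z))"

definition Mn :: "nat \<Rightarrow> l2 set" where
  "Mn n = {x \<in> L2. \<forall>m. x (n + m) = embed_up n m (x n)}"

definition Pn :: "nat \<Rightarrow> l2 \<Rightarrow> l2" where
  "Pn n a = hproj (Mn n) a"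

definition Qn :: "nat \<Rightarrow> l2 \<Rightarrow> l2" where
  "Qn n a = l2minus a (Pn n a)"

text \<open>R inside L^2: elements whose martingale is uniformly bounded in operator norm.\<close>
definition op_bounded :: "nat \<Rightarrow> cmat \<Rightarrow> real \<Rightarrow> bool" where
  "op_bounded k A C \<longleftrightarrow> (\<forall>v::nat \<Rightarrow> complex.
     (\<Sum>i<2^k. (cmod (\<Sum>j<2^k. A i j * v j))\<^sup>2) \<le> C\<^sup>2 * (\<Sum>j<2^k. (cmod (v j))\<^sup>2))"

definition psd :: "nat \<Rightarrow> cmat \<Rightarrow> bool" where
  "psd k A \<longleftrightarrow> (\<forall>v::nat \<Rightarrow> complex.
     (\<Sum>i<2^k. \<Sum>j<2^k. cnj (v i) * A i j * v j) \<in> \<real> \<and>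
     0 \<le> Re (\<Sum>i<2^k. \<Sum>j<2^k. cnj (v i) * A i j * v j))"

definition Rvec :: "l2 set" where
  "Rvec = {x \<in> L2. \<exists>C. \<forall>k. op_bounded k (x k) C}"

definition Rpos :: "l2 set" where
  "Rpos = {x \<in> Rvec. \<forall>k. psd k (x k)}"

definition L2pos :: "l2 set" where
  "L2pos = l2closure Rpos"

definition one_l2 :: l2 where
  "one_l2 = (\<lambda>k i j. if i = j \<and> i < 2^k then 1 else 0)"

definition wedge1 :: "l2 \<Rightarrow> l2" where
  "wedge1 a = hproj (l2closure {b \<in> L2pos. l2minus one_l2 b \<in> L2pos}) a"

definition nonneg_quadratic_form :: "l2 set \<Rightarrow> (l2 \<Rightarrow> real) \<Rightarrow> bool" where
  "nonneg_quadratic_form D E \<longleftrightarrow>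
     D \<subseteq> L2 \<and> (\<lambda>k i j. 0) \<in> D \<and>
     (\<forall>a\<in>D. \<forall>b\<in>D. l2add a b \<in> D) \<and> (\<forall>c. \<forall>a\<in>D. l2scale c a \<in> D) \<and>
     (\<exists>q :: l2 \<Rightarrow> l2 \<Rightarrow> complex.
        (\<forall>a\<in>D. \<forall>b\<in>D. \<forall>c\<in>D. q (l2add a b) c = q a c + q b c) \<and>
        (\<forall>s. \<forall>a\<in>D. \<forall>b\<in>D. q (l2scale s a) b = s * q a b) \<and>
        (\<forall>a\<in>D. \<forall>b\<in>D. q b a = cnj (q a b)) \<and>
        (\<forall>a\<in>D. E a = Re (q a a))) \<and>
     (\<forall>a\<in>D. 0 \<le> E a)"

definition closed_form :: "l2 set \<Rightarrow> (l2 \<Rightarrow> real) \<Rightarrow> bool" where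
  "closed_form D E \<longleftrightarrow>
     (\<forall>u a. (\<forall>m. u m \<in> D) \<longrightarrow> a \<in> L2 \<longrightarrow> (\<lambda>m. l2dist (u m) a) \<longlonglongrightarrow> 0 \<longrightarrow>
        (\<forall>e>0. \<exists>N. \<forall>m\<ge>N. \<forall>l\<ge>N. E (l2minus (u m) (u l)) < e) \<longrightarrow>
        a \<in> D \<and> (\<lambda>m. E (l2minus (u m) a)) \<longlonglongrightarrow> 0)"

definition densely_defined :: "l2 set \<Rightarrow> bool" where
  "densely_defined D \<longleftrightarrow> (\<forall>x\<in>L2. \<forall>e>0. \<exists>d\<in>D. l2dist x d < e)"

definition dirichlet_form :: "l2 set \<Rightarrow> (l2 \<Rightarrow> real) \<Rightarrow> bool" where
  "dirichlet_form D E \<longleftrightarrow>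
     nonneg_quadratic_form D E \<and> closed_form D E \<and> densely_defined D \<and>
     (\<forall>a\<in>D. l2J a \<in> D \<and> E (l2J a) = E a) \<and>
     (\<forall>a\<in>D. l2J a = a \<longrightarrow> wedge1 a \<in> D \<and> E (wedge1 a) \<le> E a)"

end

theory Submission
  imports Defs
begin

(*
  P_n a is the martingale (a_k) stopped at level n, so P_n a -> a in L^2. Direction (2) => (1)
  is continuity of E for its own seminorm (Cauchy-Schwarz). For (1) => (2), the parallelogram law
  gives E(a - P_n a) = 2 E(a) + 2 E(P_n a) - 4 E((a + P_n a)/2), and it remains to show
  liminf E((a + P_n a)/2) >= E(a): a closed form is lower semicontinuous for L^2 convergence.
  This is a Banach-Saks argument: near-minimisers of E on the midpoint hulls of the tails of the
  sequence are Cauchy for E by the parallelogram law and converge to a in L^2, so closedness forces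
  their energies to E(a), while they stay below the liminf.
*)

lemma sum_lessThan_double:
  "(\<Sum>i<2 * (m::nat). f i) = (\<Sum>i<m. f i) + (\<Sum>i<m. f (i + m) :: 'a::comm_monoid_add)"
proof -
  have "{..<2 * m} = {..<m} \<union> {m..<m + m}" by auto
  then have "(\<Sum>i<2 * m. f i) = sum f ({..<m} \<union> {m..<m + m})" by simp
  also have "\<dots> = (\<Sum>i<m. f i) + (\<Sum>i\<in>{m..<m + m}. f i)"
    by (rule sum.union_disjoint) auto
  also have "(\<Sum>i\<in>{m..<m + m}. f i) = (\<Sum>i<m. f (i + m))"
    using sum.shift_bounds_nat_ivl[of f 0 m m] by (simp add: lessThan_atLeast0)
  finally show ?thesis .
qed

definition hs_inner :: "nat \<Rightarrow> cmat \<Rightarrow> cmat \<Rightarrow> complex" where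
  "hs_inner k A B = (\<Sum>i<2^k. \<Sum>j<2^k. cnj (A i j) * B i j) / 2^k"

lemma hs_sq_eq_hs_inner: "hs_sq k A = Re (hs_inner k A A)"
proof -
  have "cnj z * z = (complex_of_real (cmod z))\<^sup>2" for z
    using complex_norm_square[of z] by (simp add: mult.commute)
  then have "hs_inner k A A = complex_of_real (hs_sq k A)"
    by (simp add: hs_inner_def hs_sq_def)
  then show ?thesis by simp
qed

lemma hs_sq_nonneg: "0 \<le> hs_sq k A"
  by (simp add: hs_sq_def sum_nonneg)

lemma hs_sq_add: "hs_sq k (\<lambda>i j. U i j + V i j) = hs_sq k U + hs_sq k V + 2 * Re (hs_inner k U V)"
proof -
  have "(cmod (u + v))\<^sup>2 = (cmod u)\<^sup>2 + (cmod v)\<^sup>2 + 2 * Re (cnj u * v)" for u v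
    by (simp add: cmod_power2 power2_sum algebra_simps)
  then show ?thesis
    by (simp add: hs_sq_def hs_inner_def sum.distrib sum_distrib_left add_divide_distrib)
qed

lemma hs_sq_scale: "hs_sq k (\<lambda>i j. c * U i j) = (cmod c)\<^sup>2 * hs_sq k U"
  by (simp add: hs_sq_def norm_mult power_mult_distrib sum_distrib_left)

lemma hs_sq_add_le: "hs_sq k (\<lambda>i j. U i j + V i j) \<le> 2 * hs_sq k U + 2 * hs_sq k V"
proof -
  have "(cmod (u + v))\<^sup>2 \<le> 2 * (cmod u)\<^sup>2 + 2 * (cmod v)\<^sup>2" for u v :: complex
  proof -
    have "(cmod (u + v))\<^sup>2 \<le> (cmod u + cmod v)\<^sup>2"
      by (simp add: power_mono norm_triangle_ineq)
    also have "\<dots> \<le> 2 * (cmod u)\<^sup>2 + 2 * (cmod v)\<^sup>2"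
      using sum_squares_bound[of "cmod u" "cmod v"] by (simp add: power2_sum)
    finally show ?thesis .
  qed
  then have "(\<Sum>i<2^k. \<Sum>j<2^k. (cmod (U i j + V i j))\<^sup>2)
      \<le> (\<Sum>i<2^k. \<Sum>j<2^k. 2 * (cmod (U i j))\<^sup>2 + 2 * (cmod (V i j))\<^sup>2)"
    by (intro sum_mono)
  also have "\<dots> = 2 * (\<Sum>i<2^k. \<Sum>j<2^k. (cmod (U i j))\<^sup>2) + 2 * (\<Sum>i<2^k. \<Sum>j<2^k. (cmod (V i j))\<^sup>2)"
    by (simp add: sum.distrib sum_distrib_left)
  finally show ?thesis
    by (simp add: hs_sq_def field_simps)
qed

lemma hs_sq_diff_le: "hs_sq k (\<lambda>i j. U i j - V i j) \<le> 2 * hs_sq k U + 2 * hs_sq k V"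
  using hs_sq_add_le[of k U "\<lambda>i j. - V i j"] by (simp add: hs_sq_def)

lemma hs_sq_eq_0D:
  assumes "hs_sq k A = 0" "i < 2^k" "j < 2^k"
  shows "A i j = 0"
proof -
  have "(\<Sum>i<2^k. \<Sum>j<2^k. (cmod (A i j))\<^sup>2) = 0"
    using assms(1) by (simp add: hs_sq_def)
  then have "(\<Sum>j<2^k. (cmod (A i j))\<^sup>2) = 0"
    using assms(2) by (subst (asm) sum_nonneg_eq_0_iff) (auto intro: sum_nonneg)
  then show ?thesis
    using assms(3) by (subst (asm) sum_nonneg_eq_0_iff) auto
qed

lemma is_mat_diff: "is_mat k A \<Longrightarrow> is_mat k B \<Longrightarrow> is_mat k (\<lambda>i j. A i j - B i j)"
  by (simp add: is_mat_def)

lemma is_mat_add: "is_mat k A \<Longrightarrow> is_mat k B \<Longrightarrow> is_mat k (\<lambda>i j. A i j + B i j)"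
  by (simp add: is_mat_def)

lemma is_mat_scale: "is_mat k A \<Longrightarrow> is_mat k (\<lambda>i j. c * A i j)"
  by (simp add: is_mat_def)

lemma is_mat_diag2: "is_mat (Suc k) (diag2 k B)"
  by (auto simp: is_mat_def diag2_def)

lemma is_mat_embed_up: "is_mat n B \<Longrightarrow> is_mat (n + m) (embed_up n m B)"
  by (induction m) (auto simp: is_mat_diag2)

lemma cexp_diag2: "is_mat k B \<Longrightarrow> cexp k (diag2 k B) = B"
  by (auto simp: cexp_def diag2_def is_mat_def fun_eq_iff)

lemma cexp_diff: "cexp k (\<lambda>i j. A i j - B i j) = (\<lambda>i j. cexp k A i j - cexp k B i j)"
  by (auto simp: cexp_def fun_eq_iff field_simps)

lemma cexp_add: "cexp k (\<lambda>i j. A i j + B i j) = (\<lambda>i j. cexp k A i j + cexp k B i j)"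
  by (auto simp: cexp_def fun_eq_iff field_simps)

lemma cexp_scale: "cexp k (\<lambda>i j. c * A i j) = (\<lambda>i j. c * cexp k A i j)"
  by (auto simp: cexp_def fun_eq_iff field_simps)

lemma embed_up_diff:
  "embed_up n m (\<lambda>i j. A i j - B i j) = (\<lambda>i j. embed_up n m A i j - embed_up n m B i j)"
  by (induction m) (auto simp: diag2_def fun_eq_iff)

lemma embed_up_zero: "embed_up n m (\<lambda>i j. 0) = (\<lambda>i j. 0)"
  by (induction m) (auto simp: diag2_def fun_eq_iff)

lemma hs_inner_diff_left: "hs_inner k (\<lambda>i j. A i j - B i j) C = hs_inner k A C - hs_inner k B C"
  by (simp add: hs_inner_def sum_subtractf algebra_simps flip: diff_divide_distrib)

lemma hs_inner_diag2: "hs_inner (Suc k) A (diag2 k B) = hs_inner k (cexp k A) B"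
proof -
  define m :: nat where "m = 2^k"
  define S where "S = (\<Sum>i<m. \<Sum>j<m. (cnj (A i j) + cnj (A (i + m) (j + m))) * B i j)"
  have "(\<Sum>i<2 * m. \<Sum>j<2 * m. cnj (A i j) * diag2 k B i j) = S"
    unfolding sum_lessThan_double S_def
    by (simp add: diag2_def m_def[symmetric] sum.distrib[symmetric] distrib_right)
  moreover have "hs_inner k (cexp k A) B = (\<Sum>i<m. \<Sum>j<m. ((cnj (A i j) + cnj (A (i + m) (j + m))) * B i j) / 2) / 2^k"
    unfolding hs_inner_def cexp_def m_def[symmetric]
    by (intro arg_cong2[where f="(/)"] sum.cong refl) (auto simp: field_simps)
  ultimately show ?thesis
    by (simp add: hs_inner_def m_def S_def sum_divide_distrib[symmetric])
qed

lemma L2_is_mat: "x \<in> L2 \<Longrightarrow> is_mat k (x k)"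
  by (simp add: L2_def)

lemma L2_cexp: "x \<in> L2 \<Longrightarrow> cexp k (x (Suc k)) = x k"
  by (simp add: L2_def)

lemma L2_bdd: "x \<in> L2 \<Longrightarrow> bdd_above (range (\<lambda>k. hs_sq k (x k)))"
  by (simp add: L2_def)

lemma hs_inner_embed_up_right:
  assumes "x \<in> L2" "is_mat n C"
  shows "hs_inner (n + m) (x (n + m)) (embed_up n m C) = hs_inner n (x n) C"
  by (induction m) (simp_all add: hs_inner_diag2 L2_cexp[OF assms(1)])

lemma hs_inner_embed_up:
  assumes "is_mat n A" "is_mat n C"
  shows "hs_inner (n + m) (embed_up n m A) (embed_up n m C) = hs_inner n A C"
  by (induction m) (simp_all add: hs_inner_diag2 cexp_diag2[OF is_mat_embed_up[OF assms(1)]])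

lemma hs_sq_embed_up: "is_mat n A \<Longrightarrow> hs_sq (n + m) (embed_up n m A) = hs_sq n A"
  by (simp add: hs_sq_eq_hs_inner hs_inner_embed_up)

lemma hs_sq_martingale_pythagoras:
  assumes x: "x \<in> L2" and C: "is_mat n C"
  shows "hs_sq (n + m) (\<lambda>i j. x (n + m) i j - embed_up n m C i j)
       = hs_sq (n + m) (\<lambda>i j. x (n + m) i j - embed_up n m (x n) i j)
         + hs_sq n (\<lambda>i j. x n i j - C i j)"
proof -
  define D where "D = (\<lambda>i j. x n i j - C i j)"
  have D: "is_mat n D"
    unfolding D_def by (rule is_mat_diff[OF L2_is_mat[OF x] C])
  define U where "U = (\<lambda>i j. x (n + m) i j - embed_up n m (x n) i j)"
  define V where "V = embed_up n m D"
  have "(\<lambda>i j. x (n + m) i j - embed_up n m C i j) = (\<lambda>i j. U i j + V i j)"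
    by (simp add: U_def V_def D_def embed_up_diff)
  moreover have "hs_inner (n + m) U V = 0"
    unfolding U_def V_def hs_inner_diff_left
    by (simp add: hs_inner_embed_up_right[OF x D] hs_inner_embed_up[OF L2_is_mat[OF x] D])
  moreover have "hs_sq (n + m) V = hs_sq n D"
    unfolding V_def by (rule hs_sq_embed_up[OF D])
  ultimately show ?thesis
    by (simp add: hs_sq_add U_def D_def)
qed

lemma hs_sq_martingale_increment:
  "x \<in> L2 \<Longrightarrow> hs_sq (n + m) (x (n + m))
     = hs_sq (n + m) (\<lambda>i j. x (n + m) i j - embed_up n m (x n) i j) + hs_sq n (x n)"
  using hs_sq_martingale_pythagoras[of x n "\<lambda>i j. 0" m]
  by (simp add: is_mat_def embed_up_zero)

lemma hs_sq_martingale_mono: "x \<in> L2 \<Longrightarrow> hs_sq n (x n) \<le> hs_sq (n + m) (x (n + m))"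
  using hs_sq_martingale_increment[of x n m] hs_sq_nonneg[of "n + m"] by simp

lemma l2nsq_LIMSEQ: "x \<in> L2 \<Longrightarrow> (\<lambda>k. hs_sq k (x k)) \<longlonglongrightarrow> l2nsq x"
  unfolding l2nsq_def
proof (rule LIMSEQ_incseq_SUP[OF L2_bdd])
  show "x \<in> L2 \<Longrightarrow> incseq (\<lambda>k. hs_sq k (x k))"
    by (rule incseq_SucI) (use hs_sq_martingale_mono[of x _ 1] in simp)
qed

lemma l2nsq_LIMSEQ_shift: "x \<in> L2 \<Longrightarrow> (\<lambda>m. hs_sq (n + m) (x (n + m))) \<longlonglongrightarrow> l2nsq x"
  using LIMSEQ_ignore_initial_segment[OF l2nsq_LIMSEQ, of x n] by (simp add: add.commute)

lemma hs_sq_le_l2nsq: "x \<in> L2 \<Longrightarrow> hs_sq k (x k) \<le> l2nsq x"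
  unfolding l2nsq_def by (rule cSUP_upper[OF _ L2_bdd]) auto

lemma l2nsq_nonneg: "x \<in> L2 \<Longrightarrow> 0 \<le> l2nsq x"
  by (rule order_trans[OF hs_sq_nonneg hs_sq_le_l2nsq])

lemma l2nsq_le: "(\<And>k. hs_sq k (x k) \<le> B) \<Longrightarrow> l2nsq x \<le> B"
  unfolding l2nsq_def by (rule cSUP_least) auto

lemma l2nsq_l2minus_commute: "l2nsq (l2minus x y) = l2nsq (l2minus y x)"
  by (simp add: l2nsq_def l2minus_def hs_sq_def norm_minus_commute)

lemma l2dist_LIMSEQ_0_iff:
  assumes "\<And>n. l2minus (u n) a \<in> L2"
  shows "(\<lambda>n. l2dist (u n) a) \<longlonglongrightarrow> 0 \<longleftrightarrow> (\<lambda>n. l2nsq (l2minus (u n) a)) \<longlonglongrightarrow> 0"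
proof
  assume "(\<lambda>n. l2dist (u n) a) \<longlonglongrightarrow> 0"
  then have "(\<lambda>n. (l2dist (u n) a)\<^sup>2) \<longlonglongrightarrow> 0"
    using tendsto_power[of _ 0 _ 2] by fastforce
  then show "(\<lambda>n. l2nsq (l2minus (u n) a)) \<longlonglongrightarrow> 0"
    by (simp add: l2dist_def l2nsq_nonneg[OF assms])
qed (use tendsto_real_sqrt in \<open>fastforce simp: l2dist_def\<close>)

lemma l2minus_L2:
  assumes "x \<in> L2" "y \<in> L2"
  shows "l2minus x y \<in> L2"
proof -
  have "hs_sq k (l2minus x y k) \<le> 2 * l2nsq x + 2 * l2nsq y" for k
    using hs_sq_diff_le[of k "x k" "y k"] hs_sq_le_l2nsq[OF assms(1), of k]
      hs_sq_le_l2nsq[OF assms(2), of k]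
    by (simp add: l2minus_def)
  with assms show ?thesis
    by (auto simp: L2_def l2minus_def is_mat_diff cexp_diff bdd_above_def)
qed

lemma l2add_L2:
  assumes "x \<in> L2" "y \<in> L2"
  shows "l2add x y \<in> L2"
proof -
  have "hs_sq k (l2add x y k) \<le> 2 * l2nsq x + 2 * l2nsq y" for k
    using hs_sq_add_le[of k "x k" "y k"] hs_sq_le_l2nsq[OF assms(1), of k]
      hs_sq_le_l2nsq[OF assms(2), of k]
    by (simp add: l2add_def)
  with assms show ?thesis
    by (auto simp: L2_def l2add_def is_mat_add cexp_add bdd_above_def)
qed

lemma l2scale_L2:
  assumes "x \<in> L2"
  shows "l2scale c x \<in> L2"
proof -
  have "hs_sq k (l2scale c x k) \<le> (cmod c)\<^sup>2 * l2nsq x" for k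
    using hs_sq_scale[of k c "x k"] hs_sq_le_l2nsq[OF assms, of k]
    by (simp add: l2scale_def mult_left_mono)
  with assms show ?thesis
    by (auto simp: L2_def l2scale_def is_mat_scale cexp_scale bdd_above_def)
qed

definition stopped :: "nat \<Rightarrow> l2 \<Rightarrow> l2" where
  "stopped n a = (\<lambda>k. if k \<le> n then a k else embed_up n (k - n) (a n))"

lemma stopped_shift: "stopped n a (n + m) = embed_up n m (a n)"
  by (cases m) (auto simp: stopped_def)

lemma stopped_L2:
  assumes a: "a \<in> L2"
  shows "stopped n a \<in> L2"
proof -
  have level: "stopped n a k = embed_up n (k - n) (a n)" if "n \<le> k" for k
    using stopped_shift[of n a "k - n"] that by simp
  have "is_mat k (stopped n a k)" for k
    using L2_is_mat[OF a] is_mat_embed_up[OF L2_is_mat[OF a], of n "k - n"]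
    by (cases "k \<le> n") (simp_all add: stopped_def)
  moreover have "cexp k (stopped n a (Suc k)) = stopped n a k" for k
  proof (cases "Suc k \<le> n")
    case True
    then show ?thesis using L2_cexp[OF a] by (simp add: stopped_def)
  next
    case False
    then have "stopped n a (Suc k) = diag2 k (stopped n a k)"
      using level[of k] level[of "Suc k"] by (simp add: Suc_diff_le)
    then show ?thesis
      using False level[of k] is_mat_embed_up[OF L2_is_mat[OF a], of n "k - n"]
      by (simp add: cexp_diag2)
  qed
  moreover have "hs_sq k (stopped n a k) \<le> l2nsq a" for k
    using hs_sq_le_l2nsq[OF a] hs_sq_embed_up[OF L2_is_mat[OF a], of n "k - n"] level[of k]
    by (cases "k \<le> n") (simp_all add: stopped_def)
  ultimately show ?thesis
    by (auto simp: L2_def bdd_above_def)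
qed

lemma stopped_Mn: "a \<in> L2 \<Longrightarrow> stopped n a \<in> Mn n"
  by (simp add: Mn_def stopped_L2 stopped_shift) (simp add: stopped_def)

lemma L2_eq_below:
  assumes "x \<in> L2" "y \<in> L2" "x n = y n" "k \<le> n"
  shows "x k = y k"
proof -
  have "x (k + d) = y (k + d) \<Longrightarrow> x k = y k" for d
  proof (induction d)
    case (Suc d)
    then show ?case
      using L2_cexp[OF assms(1), of "k + d"] L2_cexp[OF assms(2), of "k + d"] by simp
  qed simp
  from this[of "n - k"] assms show ?thesis by simp
qed

lemma Mn_eqI:
  assumes y: "y \<in> Mn n" and z: "z \<in> Mn n" and level: "y n = z n"
  shows "y = z"
proof
  fix k
  show "y k = z k"
  proof (cases "k \<le> n")
    case True
    then show ?thesis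
      using L2_eq_below[of y z n k] y z level by (simp add: Mn_def)
  next
    case False
    then obtain m where "k = n + m"
      using le_Suc_ex nat_le_linear by blast
    with y z level show ?thesis
      by (simp add: Mn_def)
  qed
qed

lemma l2nsq_l2minus_Mn:
  assumes a: "a \<in> L2" and y: "y \<in> Mn n"
  shows "l2nsq (l2minus a y)
    = l2nsq (l2minus a (stopped n a)) + hs_sq n (\<lambda>i j. a n i j - y n i j)"
proof -
  have yL: "y \<in> L2" and y_shift: "\<And>m. y (n + m) = embed_up n m (y n)"
    using y by (auto simp: Mn_def)
  have "hs_sq (n + m) (l2minus a y (n + m))
      = hs_sq (n + m) (l2minus a (stopped n a) (n + m)) + hs_sq n (\<lambda>i j. a n i j - y n i j)" for m
    using hs_sq_martingale_pythagoras[OF a L2_is_mat[OF yL, of n], of m]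
    by (simp add: l2minus_def y_shift stopped_shift)
  moreover have "(\<lambda>m. hs_sq (n + m) (l2minus a y (n + m))) \<longlonglongrightarrow> l2nsq (l2minus a y)"
    by (intro l2nsq_LIMSEQ_shift l2minus_L2 a yL)
  moreover have "(\<lambda>m. hs_sq (n + m) (l2minus a (stopped n a) (n + m)) + hs_sq n (\<lambda>i j. a n i j - y n i j))
      \<longlonglongrightarrow> l2nsq (l2minus a (stopped n a)) + hs_sq n (\<lambda>i j. a n i j - y n i j)"
    by (intro tendsto_add tendsto_const l2nsq_LIMSEQ_shift l2minus_L2 a stopped_L2)
  ultimately show ?thesis
    using LIMSEQ_unique by simp
qed

lemma l2nsq_l2minus_stopped:
  assumes a: "a \<in> L2"
  shows "l2nsq (l2minus a (stopped n a)) = l2nsq a - hs_sq n (a n)"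
proof -
  have "hs_sq (n + m) (l2minus a (stopped n a) (n + m)) = hs_sq (n + m) (a (n + m)) - hs_sq n (a n)" for m
    using hs_sq_martingale_increment[OF a, of n m] by (simp add: l2minus_def stopped_shift)
  moreover have "(\<lambda>m. hs_sq (n + m) (l2minus a (stopped n a) (n + m))) \<longlonglongrightarrow> l2nsq (l2minus a (stopped n a))"
    by (intro l2nsq_LIMSEQ_shift l2minus_L2 a stopped_L2)
  moreover have "(\<lambda>m. hs_sq (n + m) (a (n + m)) - hs_sq n (a n)) \<longlonglongrightarrow> l2nsq a - hs_sq n (a n)"
    by (intro tendsto_diff tendsto_const l2nsq_LIMSEQ_shift a)
  ultimately show ?thesis
    using LIMSEQ_unique by simp
qed

lemma Pn_eq_stopped:
  assumes a: "a \<in> L2"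
  shows "Pn n a = stopped n a"
  unfolding Pn_def hproj_def
proof (rule the_equality)
  show "stopped n a \<in> Mn n \<and> (\<forall>z\<in>Mn n. l2dist a (stopped n a) \<le> l2dist a z)"
    using stopped_Mn[OF a] l2nsq_l2minus_Mn[OF a] hs_sq_nonneg by (auto simp: l2dist_def)
next
  fix y
  assume "y \<in> Mn n \<and> (\<forall>z\<in>Mn n. l2dist a y \<le> l2dist a z)"
  then have y: "y \<in> Mn n" and "l2nsq (l2minus a y) \<le> l2nsq (l2minus a (stopped n a))"
    using stopped_Mn[OF a] by (auto simp: l2dist_def)
  then have h0: "hs_sq n (\<lambda>i j. a n i j - y n i j) = 0"
    using l2nsq_l2minus_Mn[OF a y] hs_sq_nonneg[of n "\<lambda>i j. a n i j - y n i j"] by linarith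
  have yL: "y \<in> L2"
    using y by (simp add: Mn_def)
  have "y n = a n"
  proof (intro ext)
    fix i j
    show "y n i j = a n i j"
      using hs_sq_eq_0D[OF h0, of i j] L2_is_mat[OF a, of n] L2_is_mat[OF yL, of n]
      by (cases "i < 2^n \<and> j < 2^n") (auto simp: is_mat_def)
  qed
  then show "y = stopped n a"
    using Mn_eqI[OF y stopped_Mn[OF a]] by (simp add: stopped_def)
qed

lemma Pn_Mn: "a \<in> L2 \<Longrightarrow> Pn n a \<in> Mn n"
  by (simp add: Pn_eq_stopped stopped_Mn)

lemma Pn_LIMSEQ:
  assumes a: "a \<in> L2"
  shows "(\<lambda>n. l2dist (Pn n a) a) \<longlonglongrightarrow> 0"
proof -
  have "(\<lambda>n. sqrt (l2nsq a - hs_sq n (a n))) \<longlonglongrightarrow> sqrt (l2nsq a - l2nsq a)"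
    by (intro tendsto_real_sqrt tendsto_diff tendsto_const l2nsq_LIMSEQ a)
  then show ?thesis
    by (simp add: l2dist_def Pn_eq_stopped[OF a] l2nsq_l2minus_commute[of "stopped _ a"]
        l2nsq_l2minus_stopped[OF a])
qed

lemma l2minus_eq_l2add_l2scale: "l2minus a b = l2add a (l2scale (-1) b)"
  by (simp add: l2minus_def l2add_def l2scale_def fun_eq_iff)

definition l2mid :: "l2 \<Rightarrow> l2 \<Rightarrow> l2" where
  "l2mid x y = l2scale (1/2) (l2add x y)"

lemma l2nsq_l2minus_self: "l2nsq (l2minus a a) = 0"
  by (simp add: l2nsq_def l2minus_def hs_sq_def)

lemma l2nsq_l2mid_le:
  assumes "x \<in> L2" "y \<in> L2" "a \<in> L2"
  shows "l2nsq (l2minus (l2mid x y) a) \<le> (l2nsq (l2minus x a) + l2nsq (l2minus y a)) / 2"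
proof (rule l2nsq_le)
  fix k
  have "l2minus (l2mid x y) a k = (\<lambda>i j. (1/2) * (l2minus x a k i j + l2minus y a k i j))"
    by (simp add: l2mid_def l2minus_def l2scale_def l2add_def fun_eq_iff algebra_simps)
  then have "hs_sq k (l2minus (l2mid x y) a k)
      = (cmod (1/2))\<^sup>2 * hs_sq k (\<lambda>i j. l2minus x a k i j + l2minus y a k i j)"
    by (simp only: hs_sq_scale)
  also have "\<dots> = hs_sq k (\<lambda>i j. l2minus x a k i j + l2minus y a k i j) / 4"
    by (simp add: power2_eq_square)
  also have "\<dots> \<le> (hs_sq k (l2minus x a k) + hs_sq k (l2minus y a k)) / 2"
    using hs_sq_add_le[of k "l2minus x a k" "l2minus y a k"] by simp
  also have "\<dots> \<le> (l2nsq (l2minus x a) + l2nsq (l2minus y a)) / 2"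
    using hs_sq_le_l2nsq[OF l2minus_L2[OF assms(1,3)], of k]
      hs_sq_le_l2nsq[OF l2minus_L2[OF assms(2,3)], of k]
    by simp
  finally show "hs_sq k (l2minus (l2mid x y) a k) \<le> (l2nsq (l2minus x a) + l2nsq (l2minus y a)) / 2" .
qed

lemma l2mid_L2: "x \<in> L2 \<Longrightarrow> y \<in> L2 \<Longrightarrow> l2mid x y \<in> L2"
  by (simp add: l2mid_def l2add_L2 l2scale_L2)

lemma l2mid_LIMSEQ:
  assumes a: "a \<in> L2" and b: "\<And>n. b n \<in> L2" and b_lim: "(\<lambda>n. l2dist (b n) a) \<longlonglongrightarrow> 0"
  shows "(\<lambda>n. l2dist (l2mid a (b n)) a) \<longlonglongrightarrow> 0"
proof -
  have mid_L2: "l2minus (l2mid a (b n)) a \<in> L2" for n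
    by (intro l2minus_L2 l2mid_L2 a b)
  have half_lim: "(\<lambda>n. l2nsq (l2minus (b n) a) / 2) \<longlonglongrightarrow> 0"
    using b_lim l2dist_LIMSEQ_0_iff[of b a] l2minus_L2[OF b a] by (simp add: tendsto_divide_zero)
  have "(\<lambda>n. l2nsq (l2minus (l2mid a (b n)) a)) \<longlonglongrightarrow> 0"
  proof (rule tendsto_sandwich[OF _ _ tendsto_const half_lim])
    show "\<forall>\<^sub>F n in sequentially. 0 \<le> l2nsq (l2minus (l2mid a (b n)) a)"
      by (simp add: l2nsq_nonneg[OF mid_L2])
    show "\<forall>\<^sub>F n in sequentially. l2nsq (l2minus (l2mid a (b n)) a) \<le> l2nsq (l2minus (b n) a) / 2"
      using l2nsq_l2mid_le[OF a b a] by (simp add: l2nsq_l2minus_self)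
  qed
  then show ?thesis
    using l2dist_LIMSEQ_0_iff[of "\<lambda>n. l2mid a (b n)" a] mid_L2 by blast
qed

(* A midpoint-convex substitute for the convex hull of the tail {u k | N <= k}. *)

inductive_set mid_hull :: "(nat \<Rightarrow> l2) \<Rightarrow> nat \<Rightarrow> l2 set" for u N where
  tail: "N \<le> k \<Longrightarrow> u k \<in> mid_hull u N"
| mid: "x \<in> mid_hull u N \<Longrightarrow> y \<in> mid_hull u N \<Longrightarrow> l2mid x y \<in> mid_hull u N"

lemma mid_hull_antimono:
  assumes "N \<le> M"
  shows "mid_hull u M \<subseteq> mid_hull u N"
proof
  fix x
  assume "x \<in> mid_hull u M"
  then show "x \<in> mid_hull u N"
    by induction (use assms in \<open>auto intro: mid_hull.intros\<close>)
qed

lemma mid_hull_L2: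
  assumes "\<And>k. u k \<in> L2" and "x \<in> mid_hull u N"
  shows "x \<in> L2"
  using assms(2) by induction (auto intro: l2mid_L2 assms(1))

lemma mid_hull_l2nsq_le:
  assumes a: "a \<in> L2" and u: "\<And>k. u k \<in> L2"
    and u_tail: "\<And>k. N \<le> k \<Longrightarrow> l2nsq (l2minus (u k) a) \<le> r"
    and x: "x \<in> mid_hull u N"
  shows "l2nsq (l2minus x a) \<le> r"
  using x
proof (induction rule: mid_hull.induct)
  case (tail k)
  then show ?case by (rule u_tail)
next
  case (mid x y)
  then show ?case
    using l2nsq_l2mid_le[OF mid_hull_L2[OF u mid.hyps(1)] mid_hull_L2[OF u mid.hyps(2)] a]
    by simp
qed

lemma mid_hull_LIMSEQ:
  assumes a: "a \<in> L2" and u: "\<And>n. u n \<in> L2" and u_lim: "(\<lambda>n. l2dist (u n) a) \<longlonglongrightarrow> 0"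
    and x: "\<And>N. x N \<in> mid_hull u N"
  shows "(\<lambda>N. l2dist (x N) a) \<longlonglongrightarrow> 0"
proof -
  have xL: "x N \<in> L2" for N
    by (rule mid_hull_L2[OF u x])
  have u_lim': "(\<lambda>n. l2nsq (l2minus (u n) a)) \<longlonglongrightarrow> 0"
    using u_lim l2dist_LIMSEQ_0_iff[of u a] u a l2minus_L2 by blast
  have "(\<lambda>N. l2nsq (l2minus (x N) a)) \<longlonglongrightarrow> 0"
  proof (rule LIMSEQ_I)
    fix r :: real
    assume "0 < r"
    then obtain N0 where "\<forall>k\<ge>N0. norm (l2nsq (l2minus (u k) a) - 0) < r / 2"
      using LIMSEQ_D[OF u_lim', of "r / 2"] by auto
    then have N0: "\<And>k. N0 \<le> k \<Longrightarrow> l2nsq (l2minus (u k) a) \<le> r / 2"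
      by (auto simp: abs_less_iff)
    have "norm (l2nsq (l2minus (x N) a) - 0) < r" if "N0 \<le> N" for N
    proof -
      have "x N \<in> mid_hull u N0"
        using x[of N] mid_hull_antimono[OF that] by blast
      with a u N0 have "l2nsq (l2minus (x N) a) \<le> r / 2"
        by (rule mid_hull_l2nsq_le)
      then show ?thesis
        using l2nsq_nonneg[OF l2minus_L2[OF xL a]] \<open>0 < r\<close> by simp
    qed
    then show "\<exists>N0. \<forall>N\<ge>N0. norm (l2nsq (l2minus (x N) a) - 0) < r" by blast
  qed
  then show ?thesis
    using l2dist_LIMSEQ_0_iff[of x a] xL a l2minus_L2 by blast
qed

lemma Cauchy_of_parallelogram_bound:
  fixes f g :: "nat \<Rightarrow> real"
  assumes f: "f \<longlonglongrightarrow> L" and g: "g \<longlonglongrightarrow> L"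
    and h: "\<And>m l. h m l \<le> 2 * f m + 2 * f l - 4 * g (min m l)"
  shows "\<forall>e>0. \<exists>N. \<forall>m\<ge>N. \<forall>l\<ge>N. h m l < e"
proof (intro allI impI)
  fix e :: real
  assume "e > 0"
  then obtain N1 N2 where N1: "\<And>n. n \<ge> N1 \<Longrightarrow> \<bar>f n - L\<bar> < e / 16"
      and N2: "\<And>n. n \<ge> N2 \<Longrightarrow> \<bar>g n - L\<bar> < e / 16"
    using LIMSEQ_D[OF f, of "e / 16"] LIMSEQ_D[OF g, of "e / 16"] by auto
  have "h m l < e" if "max N1 N2 \<le> m" "max N1 N2 \<le> l" for m l
  proof -
    have "\<bar>f m - L\<bar> < e / 16" "\<bar>f l - L\<bar> < e / 16" "\<bar>g (min m l) - L\<bar> < e / 16"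
      using N1 N2 that by auto
    then show ?thesis using h[of m l] \<open>e > 0\<close> by linarith
  qed
  then show "\<exists>N. \<forall>m\<ge>N. \<forall>l\<ge>N. h m l < e" by blast
qed

locale hermitian_form =
  fixes D :: "l2 set" and E :: "l2 \<Rightarrow> real" and q :: "l2 \<Rightarrow> l2 \<Rightarrow> complex"
  assumes subset_L2: "D \<subseteq> L2"
    and add_closed: "\<And>a b. a \<in> D \<Longrightarrow> b \<in> D \<Longrightarrow> l2add a b \<in> D"
    and scale_closed: "\<And>c a. a \<in> D \<Longrightarrow> l2scale c a \<in> D"
    and q_add_left: "\<And>a b c. a \<in> D \<Longrightarrow> b \<in> D \<Longrightarrow> c \<in> D \<Longrightarrow> q (l2add a b) c = q a c + q b c"
    and q_scale_left: "\<And>s a b. a \<in> D \<Longrightarrow> b \<in> D \<Longrightarrow> q (l2scale s a) b = s * q a b"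
    and q_commute: "\<And>a b. a \<in> D \<Longrightarrow> b \<in> D \<Longrightarrow> q b a = cnj (q a b)"
    and E_eq: "\<And>a. a \<in> D \<Longrightarrow> E a = Re (q a a)"
    and E_nonneg: "\<And>a. a \<in> D \<Longrightarrow> 0 \<le> E a"

lemma nonneg_quadratic_form_imp_hermitian_form:
  assumes "nonneg_quadratic_form D E"
  obtains q where "hermitian_form D E q"
proof -
  from assms obtain q where
      "\<forall>a\<in>D. \<forall>b\<in>D. \<forall>c\<in>D. q (l2add a b) c = q a c + q b c"
      "\<forall>s. \<forall>a\<in>D. \<forall>b\<in>D. q (l2scale s a) b = s * q a b"
      "\<forall>a\<in>D. \<forall>b\<in>D. q b a = cnj (q a b)" "\<forall>a\<in>D. E a = Re (q a a)"
    unfolding nonneg_quadratic_form_def by blast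
  moreover have "D \<subseteq> L2" "\<forall>a\<in>D. \<forall>b\<in>D. l2add a b \<in> D" "\<forall>c. \<forall>a\<in>D. l2scale c a \<in> D"
      "\<forall>a\<in>D. 0 \<le> E a"
    using assms unfolding nonneg_quadratic_form_def by blast+
  ultimately have "hermitian_form D E q"
    by unfold_locales blast+
  then show ?thesis by (rule that)
qed

context hermitian_form
begin

lemma minus_closed: "a \<in> D \<Longrightarrow> b \<in> D \<Longrightarrow> l2minus a b \<in> D"
  unfolding l2minus_eq_l2add_l2scale by (intro add_closed scale_closed)

lemma mid_closed: "a \<in> D \<Longrightarrow> b \<in> D \<Longrightarrow> l2mid a b \<in> D"
  unfolding l2mid_def by (intro add_closed scale_closed)

lemma q_add_right:
  assumes "a \<in> D" "b \<in> D" "c \<in> D"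
  shows "q c (l2add a b) = q c a + q c b"
proof -
  have "cnj (q c (l2add a b)) = cnj (q c a + q c b)"
    using q_commute[of c "l2add a b"] q_add_left[of a b c] q_commute[of c a] q_commute[of c b]
      add_closed[of a b] assms
    by simp
  then show ?thesis by (simp only: complex_cnj_cancel_iff)
qed

lemma q_scale_right:
  assumes "a \<in> D" "b \<in> D"
  shows "q a (l2scale s b) = cnj s * q a b"
proof -
  have "cnj (q a (l2scale s b)) = cnj (cnj s * q a b)"
    using q_commute[of a "l2scale s b"] q_scale_left[of b a s] q_commute[of a b]
      scale_closed[of b s] assms
    by simp
  then show ?thesis by (simp only: complex_cnj_cancel_iff)
qed

lemma E_add: "a \<in> D \<Longrightarrow> b \<in> D \<Longrightarrow> E (l2add a b) = E a + E b + 2 * Re (q a b)"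
  using E_eq[of "l2add a b"] add_closed[of a b] q_add_left[of a b "l2add a b"]
    q_add_right[of a b a] q_add_right[of a b b] q_commute[of a b] E_eq[of a] E_eq[of b]
  by simp

lemma E_scale:
  assumes a: "a \<in> D"
  shows "E (l2scale c a) = (cmod c)\<^sup>2 * E a"
proof -
  have "q (l2scale c a) (l2scale c a) = complex_of_real ((cmod c)\<^sup>2) * q a a"
    using q_scale_left[OF a scale_closed[OF a], of c c] q_scale_right[OF a a, of c]
      complex_norm_square[of c]
    by simp
  then show ?thesis
    using E_eq[OF scale_closed[OF a]] E_eq[OF a] by simp
qed

lemma E_minus: "a \<in> D \<Longrightarrow> b \<in> D \<Longrightarrow> E (l2minus a b) = E a + E b - 2 * Re (q a b)"
  using E_add[of a "l2scale (-1) b"] scale_closed[of b "-1"] E_scale[of b "-1"] q_scale_right[of a b "-1"]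
  by (simp add: l2minus_eq_l2add_l2scale)

lemma E_minus_commute: "a \<in> D \<Longrightarrow> b \<in> D \<Longrightarrow> E (l2minus a b) = E (l2minus b a)"
  using E_minus[of a b] E_minus[of b a] q_commute[of a b] by simp

lemma E_parallelogram:
  "x \<in> D \<Longrightarrow> y \<in> D \<Longrightarrow> E (l2minus x y) = 2 * E x + 2 * E y - 4 * E (l2mid x y)"
  using E_add[of x y] E_minus[of x y] E_scale[OF add_closed[of x y], of "1/2"]
  by (simp add: l2mid_def power2_eq_square)

lemma Re_q_squared_le:
  assumes a: "a \<in> D" and b: "b \<in> D"
  shows "(Re (q a b))\<^sup>2 \<le> E a * E b"
proof -
  define r where "r = Re (q a b)"
  have quadratic: "0 \<le> E a + t\<^sup>2 * E b + 2 * t * r" for t :: real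
  proof -
    have "0 \<le> E (l2add a (l2scale (complex_of_real t) b))"
      by (intro E_nonneg add_closed scale_closed a b)
    also have "\<dots> = E a + t\<^sup>2 * E b + 2 * t * r"
      using E_add[OF a scale_closed[OF b]] E_scale[OF b] q_scale_right[OF a b] by (simp add: r_def)
    finally show ?thesis .
  qed
  show ?thesis
  proof (cases "E b = 0")
    case True
    have "r = 0"
    proof (rule ccontr)
      assume "r \<noteq> 0"
      with quadratic[of "- (E a + 1) / (2 * r)"] True show False by (simp add: field_simps)
    qed
    with True show ?thesis by (simp add: r_def)
  next
    case False
    then have Eb: "E b > 0" using E_nonneg[OF b] by simp
    with quadratic[of "- r / E b"] have "r\<^sup>2 / E b \<le> E a"
      by (simp add: field_simps power2_eq_square)
    with Eb show ?thesis by (simp add: r_def field_simps mult.commute)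
  qed
qed

lemma E_LIMSEQ_of_E_minus_LIMSEQ_0:
  assumes a: "a \<in> D" and u: "\<And>m. u m \<in> D" and lim: "(\<lambda>m. E (l2minus (u m) a)) \<longlonglongrightarrow> 0"
  shows "(\<lambda>m. E (u m)) \<longlonglongrightarrow> E a"
proof -
  define w where "w m = l2minus (u m) a" for m
  have w: "w m \<in> D" for m by (simp add: w_def minus_closed[OF u a])
  have "u m = l2add a (w m)" for m
    by (simp add: w_def l2add_def l2minus_def fun_eq_iff)
  then have Eu: "E (u m) = E a + E (w m) + 2 * Re (q a (w m))" for m
    using E_add[OF a w] by simp
  have Ew: "(\<lambda>m. E (w m)) \<longlonglongrightarrow> 0" using lim by (simp add: w_def)
  have bound: "\<bar>Re (q a (w m))\<bar> \<le> sqrt (E a * E (w m))" for m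
    using real_sqrt_le_mono[OF Re_q_squared_le[OF a w]] by simp
  have "(\<lambda>m. sqrt (E a * E (w m))) \<longlonglongrightarrow> 0"
    using tendsto_real_sqrt[OF tendsto_mult[OF tendsto_const Ew, of "E a"]] by simp
  then have "(\<lambda>m. \<bar>Re (q a (w m))\<bar>) \<longlonglongrightarrow> 0"
    by (rule tendsto_sandwich[rotated 2, OF tendsto_const]) (simp_all add: bound)
  then have "(\<lambda>m. Re (q a (w m))) \<longlonglongrightarrow> 0"
    by (rule tendsto_rabs_zero_cancel)
  then have "(\<lambda>m. E a + E (w m) + 2 * Re (q a (w m))) \<longlonglongrightarrow> E a + 0 + 2 * 0"
    by (intro tendsto_intros Ew)
  then show ?thesis by (simp add: Eu)
qed

lemma mid_hull_subset:
  assumes "\<And>k. u k \<in> D"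
  shows "mid_hull u N \<subseteq> D"
proof
  fix x
  assume "x \<in> mid_hull u N"
  then show "x \<in> D"
    by induction (auto intro: mid_closed assms)
qed

definition hull_energy :: "(nat \<Rightarrow> l2) \<Rightarrow> nat \<Rightarrow> real" where
  "hull_energy u N = Inf (E ` mid_hull u N)"

lemma hull_energy_le:
  assumes "\<And>k. u k \<in> D" and "x \<in> mid_hull u N"
  shows "hull_energy u N \<le> E x"
proof -
  have "bdd_below (E ` mid_hull u N)"
    using mid_hull_subset[where u = u, OF assms(1)] E_nonneg by (auto simp: bdd_below_def)
  then show ?thesis
    unfolding hull_energy_def using assms(2) by (auto intro: cInf_lower)
qed

lemma incseq_hull_energy:
  assumes "\<And>k. u k \<in> D"
  shows "incseq (hull_energy u)"
proof (rule monoI)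
  fix m n :: nat
  assume "m \<le> n"
  then have "E ` mid_hull u n \<subseteq> E ` mid_hull u m"
    by (intro image_mono mid_hull_antimono)
  moreover have "bdd_below (E ` mid_hull u m)"
    using mid_hull_subset[where u = u, OF assms] E_nonneg by (auto simp: bdd_below_def)
  moreover have "u n \<in> mid_hull u n"
    by (rule mid_hull.tail) simp
  ultimately show "hull_energy u m \<le> hull_energy u n"
    unfolding hull_energy_def by (intro cInf_superset_mono) auto
qed

lemma hull_energy_approx:
  assumes "e > 0"
  obtains x where "x \<in> mid_hull u N" "E x < hull_energy u N + e"
proof -
  have "u N \<in> mid_hull u N"
    by (rule mid_hull.tail) simp
  moreover have "Inf (E ` mid_hull u N) < hull_energy u N + e"
    using assms by (simp add: hull_energy_def)
  ultimately show ?thesis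
    using cInf_lessD[of "E ` mid_hull u N"] that by blast
qed

lemma near_minimisers_Cauchy:
  assumes u: "\<And>k. u k \<in> D" and lim: "hull_energy u \<longlonglongrightarrow> \<delta>"
    and x: "\<And>N. x N \<in> mid_hull u N" and x_energy: "\<And>N. E (x N) < hull_energy u N + 1 / Suc N"
  shows "\<forall>e>0. \<exists>N. \<forall>m\<ge>N. \<forall>l\<ge>N. E (l2minus (x m) (x l)) < e"
proof (rule Cauchy_of_parallelogram_bound[OF _ lim])
  show "(\<lambda>N. hull_energy u N + 1 / Suc N) \<longlonglongrightarrow> \<delta>"
    using tendsto_add[OF lim lim_1_over_n[THEN LIMSEQ_Suc]] by simp
next
  fix m l
  have xD: "x N \<in> D" for N
    using x mid_hull_subset[where u = u, OF u] by blast
  have "x m \<in> mid_hull u (min m l)" "x l \<in> mid_hull u (min m l)"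
    using x[of m] x[of l] mid_hull_antimono[of "min m l" m u] mid_hull_antimono[of "min m l" l u]
    by auto
  then have "hull_energy u (min m l) \<le> E (l2mid (x m) (x l))"
    by (intro hull_energy_le[where u = u, OF u] mid_hull.mid)
  then show "E (l2minus (x m) (x l))
      \<le> 2 * (hull_energy u m + 1 / Suc m) + 2 * (hull_energy u l + 1 / Suc l)
         - 4 * hull_energy u (min m l)"
    using E_parallelogram[OF xD xD, of m l] x_energy[of m] x_energy[of l] by argo
qed

lemma E_le_lim_hull_energy:
  assumes closed: "closed_form D E" and a: "a \<in> D" and u: "\<And>n. u n \<in> D"
    and u_lim: "(\<lambda>n. l2dist (u n) a) \<longlonglongrightarrow> 0" and lim: "hull_energy u \<longlonglongrightarrow> \<delta>"
  shows "E a \<le> \<delta>"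
proof -
  have "\<exists>x. x \<in> mid_hull u N \<and> E x < hull_energy u N + 1 / Suc N" for N
    by (rule hull_energy_approx[of "1 / Suc N"]) auto
  then obtain x where x: "\<And>N. x N \<in> mid_hull u N"
    and x_energy: "\<And>N. E (x N) < hull_energy u N + 1 / Suc N"
    by metis
  have xD: "x N \<in> D" for N
    using x mid_hull_subset[where u = u, OF u] by blast
  have "(\<lambda>N. l2dist (x N) a) \<longlonglongrightarrow> 0"
    using mid_hull_LIMSEQ[OF _ _ u_lim x] a u subset_L2 by auto
  then have "(\<lambda>N. E (l2minus (x N) a)) \<longlonglongrightarrow> 0"
    using closed near_minimisers_Cauchy[OF u lim x x_energy] a xD subset_L2
    unfolding closed_form_def by blast
  then have "(\<lambda>N. E (x N)) \<longlonglongrightarrow> E a"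
    by (rule E_LIMSEQ_of_E_minus_LIMSEQ_0[OF a xD])
  moreover have "(\<lambda>N. hull_energy u N + 1 / Suc N) \<longlonglongrightarrow> \<delta>"
    using tendsto_add[OF lim lim_1_over_n[THEN LIMSEQ_Suc]] by simp
  ultimately show ?thesis
    using x_energy by (intro LIMSEQ_le) (auto intro: less_imp_le)
qed

lemma closed_form_lower_semicontinuous:
  assumes closed: "closed_form D E" and a: "a \<in> D" and u: "\<And>n. u n \<in> D"
    and u_lim: "(\<lambda>n. l2dist (u n) a) \<longlonglongrightarrow> 0" and y: "y < E a"
  shows "\<forall>\<^sub>F n in sequentially. y < E (u n)"
proof -
  have "\<exists>N. y < hull_energy u N"
  proof (rule ccontr)
    assume "\<nexists>N. y < hull_energy u N"
    then have bounded: "hull_energy u N \<le> y" for N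
      by (simp add: not_less)
    then obtain \<delta> where "hull_energy u \<longlonglongrightarrow> \<delta>"
      using incseq_convergent[OF incseq_hull_energy[where u = u, OF u]] by blast
    with bounded have "E a \<le> y"
      using E_le_lim_hull_energy[OF closed a u u_lim] LIMSEQ_le_const2 by (meson order_trans)
    with y show False by simp
  qed
  then obtain N where "y < hull_energy u N" ..
  moreover have "hull_energy u N \<le> E (u n)" if "N \<le> n" for n
    using that by (intro hull_energy_le[where u = u, OF u] mid_hull.tail)
  ultimately show ?thesis
    by (intro eventually_sequentiallyI[of N]) (auto intro: less_le_trans)
qed

lemma closed_form_E_LIMSEQ_iff:
  assumes closed: "closed_form D E" and a: "a \<in> D" and b: "\<And>n. b n \<in> D"
    and b_lim: "(\<lambda>n. l2dist (b n) a) \<longlonglongrightarrow> 0"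
  shows "(\<lambda>n. E (b n)) \<longlonglongrightarrow> E a \<longleftrightarrow> (\<lambda>n. E (l2minus a (b n))) \<longlonglongrightarrow> 0"
proof
  assume "(\<lambda>n. E (l2minus a (b n))) \<longlonglongrightarrow> 0"
  then show "(\<lambda>n. E (b n)) \<longlonglongrightarrow> E a"
    using E_minus_commute[OF a b] by (intro E_LIMSEQ_of_E_minus_LIMSEQ_0[OF a b]) simp
next
  assume Eb: "(\<lambda>n. E (b n)) \<longlonglongrightarrow> E a"
  define c where "c n = l2mid a (b n)" for n
  have aL: "a \<in> L2" and bL: "b n \<in> L2" for n
    using a b subset_L2 by auto
  have cD: "c n \<in> D" for n
    unfolding c_def by (rule mid_closed[OF a b])
  have c_lim: "(\<lambda>n. l2dist (c n) a) \<longlonglongrightarrow> 0"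
    unfolding c_def by (rule l2mid_LIMSEQ[OF aL bL b_lim])
  show "(\<lambda>n. E (l2minus a (b n))) \<longlonglongrightarrow> 0"
  proof (rule tendstoI)
    fix e :: real
    assume "0 < e"
    then have "\<forall>\<^sub>F n in sequentially. E a - e / 8 < E (c n)" "\<forall>\<^sub>F n in sequentially. E (b n) < E a + e / 4"
      by (auto intro: closed_form_lower_semicontinuous[OF closed a cD c_lim] order_tendstoD(2)[OF Eb])
    then show "\<forall>\<^sub>F n in sequentially. dist (E (l2minus a (b n))) 0 < e"
    proof eventually_elim
      case (elim n)
      then show ?case
        using E_parallelogram[OF a b, of n] E_nonneg[OF minus_closed[OF a b], of n]
        by (simp add: c_def abs_less_iff)
    qed
  qed
qed

end

theorem proposition2p3:
  assumes "dirichlet_form D E"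
    and "(\<Union>n. Mn n) \<subseteq> D"
  shows "(\<forall>a\<in>D. (\<lambda>n. E (Pn n a)) \<longlonglongrightarrow> E a) \<longleftrightarrow>
         (\<forall>a\<in>D. (\<lambda>n. E (Qn n a)) \<longlonglongrightarrow> 0)"
proof -
  have closed: "closed_form D E" and form: "nonneg_quadratic_form D E"
    using assms(1) by (simp_all add: dirichlet_form_def)
  obtain q where "hermitian_form D E q"
    using form by (rule nonneg_quadratic_form_imp_hermitian_form)
  then interpret hermitian_form D E q .
  have "Pn n a \<in> D" and "(\<lambda>n. l2dist (Pn n a) a) \<longlonglongrightarrow> 0" if "a \<in> D" for a n
    using that assms(2) subset_L2 Pn_Mn Pn_LIMSEQ by blast+
  then show ?thesis
    using closed_form_E_LIMSEQ_iff[OF closed] by (simp add: Qn_def)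
qed

end
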